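(* For every infinite sequence of integers $a_1,a_2,a_3,\dots$ there exists a rod set $R$ such that $F(n,R)=a_n$ for all $n\ge1$.
   Context: A rod is a triple $(r,c,\varepsilon)$ with $r$ a positive integer (its length), $c$ an arbitrary tag (a "color"), and $\varepsilon\in\{+1,-1\}$ its sign; a rod of sign $-1$ is an antirod. A rod set is a set of rods with only finitely many rods of each length. A train built from $R$ is a finite sequence of rods of $R$, including the empty train; its length is the sum of the rod lengths and its sign the product of the rod signs. The net train count $F(n,R)$ is the number of positive trains of length $n$ built from $R$ minus the number of negative ones (so $F(0,R)=1$). *)

theory Defs
  imports Main
begin

text \<open>A rod is a triple (length, colour, sign).\<close>
type_synonym 'c rod = "nat \<times> 'c \<times> int"

definition rod_len :: "'c rod \<Rightarrow> nat" where "rod_len x = fst x"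
definition rod_sign :: "'c rod \<Rightarrow> int" where "rod_sign x = snd (snd x)"

definition is_rod :: "'c rod \<Rightarrow> bool" where
  "is_rod x \<longleftrightarrow> rod_len x > 0 \<and> (rod_sign x = 1 \<or> rod_sign x = -1)"

definition rod_set :: "'c rod set \<Rightarrow> bool" where
  "rod_set R \<longleftrightarrow> (\<forall>x\<in>R. is_rod x) \<and> (\<forall>n. finite {x\<in>R. rod_len x = n})"

definition train_len :: "'c rod list \<Rightarrow> nat" where
  "train_len t = sum_list (map rod_len t)"

definition train_sign :: "'c rod list \<Rightarrow> int" where
  "train_sign t = prod_list (map rod_sign t)"

definition trains :: "'c rod set \<Rightarrow> nat \<Rightarrow> 'c rod list set" where
  "trains R n = {t. set t \<subseteq> R \<and> train_len t = n}"

definition F :: "nat \<Rightarrow> 'c rod set \<Rightarrow> int" where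
  "F n R = int (card {t\<in>trains R n. train_sign t = 1}) - int (card {t\<in>trains R n. train_sign t = -1})"

end

theory Submission
  imports Defs
begin

(* Splitting off the first rod of a train gives the recurrence
   F(n,R) = sum over k = 1..n of c_k F(n-k,R) for n > 0, with F(0,R) = 1, where c_k
   is the number of rods of length k minus the number of antirods of length k.
   Any integers c_k arise this way, from |c_k| rods of length k and sign sgn c_k.
   Since the recurrence is triangular, the c_k can be chosen one after the other
   so that its solution is the prescribed sequence. *)

definition net_rods :: "'c rod set \<Rightarrow> nat \<Rightarrow> int" where
  "net_rods R k = (\<Sum>x\<in>{x\<in>R. rod_len x = k}. rod_sign x)"

lemma rod_set_finite_le:
  assumes "rod_set R"
  shows "finite {x\<in>R. rod_len x \<le> n}"
proof -
  have "{x\<in>R. rod_len x \<le> n} = (\<Union>k\<le>n. {x\<in>R. rod_len x = k})" by auto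
  then show ?thesis using assms by (simp add: rod_set_def)
qed

lemma length_le_train_len:
  assumes "rod_set R" "set t \<subseteq> R"
  shows "length t \<le> train_len t"
  using assms(2)
proof (induction t)
  case (Cons x t)
  then have "rod_len x > 0" using assms(1) by (auto simp: rod_set_def is_rod_def)
  with Cons show ?case by (simp add: train_len_def)
qed simp

lemma finite_trains:
  assumes "rod_set R"
  shows "finite (trains R n)"
proof (rule finite_subset)
  show "trains R n \<subseteq> {t. set t \<subseteq> {x\<in>R. rod_len x \<le> n} \<and> length t \<le> n}"
  proof
    fix t assume t: "t \<in> trains R n"
    have "rod_len x \<le> n" if "x \<in> set t" for x
      using t that member_le_sum_list[of "rod_len x" "map rod_len t"]
      by (auto simp: trains_def train_len_def)
    moreover have "length t \<le> n"
      using t length_le_train_len[OF assms] by (auto simp: trains_def)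
    ultimately show "t \<in> {t. set t \<subseteq> {x\<in>R. rod_len x \<le> n} \<and> length t \<le> n}"
      using t by (auto simp: trains_def)
  qed
  show "finite {t. set t \<subseteq> {x\<in>R. rod_len x \<le> n} \<and> length t \<le> n}"
    using finite_lists_length_le[OF rod_set_finite_le[OF assms]] .
qed

lemma train_sign_cases:
  assumes "rod_set R" "set t \<subseteq> R"
  shows "train_sign t = 1 \<or> train_sign t = -1"
  using assms(2)
proof (induction t)
  case (Cons x t)
  then have "rod_sign x = 1 \<or> rod_sign x = -1" using assms(1) by (auto simp: rod_set_def is_rod_def)
  with Cons show ?case by (auto simp: train_sign_def)
qed (simp add: train_sign_def)

lemma F_eq_sum_train_sign:
  assumes "rod_set R"
  shows "F n R = (\<Sum>t\<in>trains R n. train_sign t)"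
proof -
  let ?P = "{t\<in>trains R n. train_sign t = 1}"
  let ?N = "{t\<in>trains R n. train_sign t = -1}"
  have "trains R n = ?P \<union> ?N"
    using train_sign_cases[OF assms] by (auto simp: trains_def)
  then have "(\<Sum>t\<in>trains R n. train_sign t) = (\<Sum>t\<in>?P \<union> ?N. train_sign t)"
    by (rule arg_cong)
  also have "\<dots> = (\<Sum>t\<in>?P. train_sign t) + (\<Sum>t\<in>?N. train_sign t)"
    using finite_trains[OF assms, of n] by (intro sum.union_disjoint) auto
  also have "\<dots> = int (card ?P) - int (card ?N)" by simp
  finally show ?thesis by (simp add: F_def)
qed

lemma trains_0:
  assumes "rod_set R"
  shows "trains R 0 = {[]}"
proof -
  have "t = []" if "t \<in> trains R 0" for t
    using that length_le_train_len[OF assms, of t] by (auto simp: trains_def)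
  then show ?thesis by (auto simp: trains_def train_len_def)
qed

lemma F_0:
  assumes "rod_set R"
  shows "F 0 R = 1"
  by (simp add: F_eq_sum_train_sign[OF assms] trains_0[OF assms] train_sign_def)

lemma trains_eq_UN_Cons:
  assumes "n > 0"
  shows "trains R n = (\<Union>x\<in>{x\<in>R. rod_len x \<le> n}. (#) x ` trains R (n - rod_len x))"
proof (intro equalityI subsetI)
  fix t assume t: "t \<in> trains R n"
  with assms obtain x u where "t = x # u"
    by (cases t) (auto simp: trains_def train_len_def)
  with t show "t \<in> (\<Union>x\<in>{x\<in>R. rod_len x \<le> n}. (#) x ` trains R (n - rod_len x))"
    by (intro UN_I[of x] image_eqI[of _ _ u]) (auto simp: trains_def train_len_def)
qed (auto simp: trains_def train_len_def)

lemma F_first_rod: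
  assumes "rod_set R" "n > 0"
  shows "F n R = (\<Sum>x\<in>{x\<in>R. rod_len x \<le> n}. rod_sign x * F (n - rod_len x) R)"
proof -
  have "F n R = (\<Sum>x\<in>{x\<in>R. rod_len x \<le> n}. \<Sum>t\<in>(#) x ` trains R (n - rod_len x). train_sign t)"
    unfolding F_eq_sum_train_sign[OF assms(1)] trains_eq_UN_Cons[OF assms(2)]
    by (rule sum.UNION_disjoint) (auto simp: rod_set_finite_le finite_trains assms(1))
  also have "\<dots> = (\<Sum>x\<in>{x\<in>R. rod_len x \<le> n}. \<Sum>t\<in>trains R (n - rod_len x). train_sign (x # t))"
    by (simp add: sum.reindex)
  also have "\<dots> = (\<Sum>x\<in>{x\<in>R. rod_len x \<le> n}. rod_sign x * F (n - rod_len x) R)"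
    by (simp add: F_eq_sum_train_sign[OF assms(1)] train_sign_def sum_distrib_left)
  finally show ?thesis .
qed

lemma F_recurrence:
  assumes "rod_set R" "n > 0"
  shows "F n R = (\<Sum>k=1..n. net_rods R k * F (n - k) R)"
proof -
  let ?A = "{x\<in>R. rod_len x \<le> n}"
  have lens: "rod_len ` ?A \<subseteq> {1..n}"
    using assms(1) by (auto simp: rod_set_def is_rod_def)
  have "F n R = (\<Sum>k=1..n. \<Sum>x\<in>{x\<in>?A. rod_len x = k}. rod_sign x * F (n - rod_len x) R)"
    unfolding F_first_rod[OF assms]
    by (rule sum.group[symmetric]) (use lens rod_set_finite_le[OF assms(1)] in auto)
  also have "\<dots> = (\<Sum>k=1..n. \<Sum>x\<in>{x\<in>R. rod_len x = k}. rod_sign x * F (n - k) R)"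
    by (intro sum.cong refl) auto
  finally show ?thesis by (simp add: net_rods_def sum_distrib_right)
qed

definition rods_with_net_count :: "(nat \<Rightarrow> int) \<Rightarrow> nat rod set" where
  "rods_with_net_count c = {(k, i, s). k \<ge> 1 \<and> i < nat \<bar>c k\<bar> \<and> s = sgn (c k)}"

lemma rods_with_net_count_of_length:
  assumes "k \<ge> 1"
  shows "{x\<in>rods_with_net_count c. rod_len x = k} = (\<lambda>i. (k, i, sgn (c k))) ` {..<nat \<bar>c k\<bar>}"
  using assms by (auto simp: rods_with_net_count_def rod_len_def)

lemma rod_set_rods_with_net_count: "rod_set (rods_with_net_count c)"
proof -
  have "{x\<in>rods_with_net_count c. rod_len x = k} \<subseteq> (\<lambda>i. (k, i, sgn (c k))) ` {..<nat \<bar>c k\<bar>}" for k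
    by (auto simp: rods_with_net_count_def rod_len_def)
  then have "finite {x\<in>rods_with_net_count c. rod_len x = k}" for k
    by (rule finite_subset) simp
  moreover have "is_rod x" if "x \<in> rods_with_net_count c" for x
  proof -
    from that obtain k i where "x = (k, i, sgn (c k))" "k \<ge> 1" "c k \<noteq> 0"
      by (auto simp: rods_with_net_count_def)
    then show ?thesis by (auto simp: is_rod_def rod_len_def rod_sign_def sgn_if)
  qed
  ultimately show ?thesis by (simp add: rod_set_def)
qed

lemma net_rods_rods_with_net_count:
  assumes "k \<ge> 1"
  shows "net_rods (rods_with_net_count c) k = c k"
proof -
  have "net_rods (rods_with_net_count c) k = int (nat \<bar>c k\<bar>) * sgn (c k)"
    by (simp add: net_rods_def rods_with_net_count_of_length[OF assms] sum.reindex inj_on_def rod_sign_def)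
  also have "\<dots> = c k" by (simp add: sgn_if)
  finally show ?thesis .
qed

text \<open>The value a 0 is never consulted, so the solution of the recurrence may
  start with 1 regardless of a.\<close>

function recurrence_coeffs :: "(nat \<Rightarrow> int) \<Rightarrow> nat \<Rightarrow> int" where
  "recurrence_coeffs a n = a n - (\<Sum>k=1..<n. recurrence_coeffs a k * a (n - k))"
  by pat_completeness auto
termination by (relation "measure snd") auto

declare recurrence_coeffs.simps [simp del]

lemma recurrence_coeffs_solution:
  assumes f0: "f 0 = 1"
    and rec: "\<And>n. n > 0 \<Longrightarrow> f n = (\<Sum>k=1..n. recurrence_coeffs a k * f (n - k))"
    and "n \<ge> 1"
  shows "f n = a n"
  using \<open>n \<ge> 1\<close>
proof (induction n rule: less_induct)
  case (less n)
  have "f n = recurrence_coeffs a n * f 0 + (\<Sum>k=1..<n. recurrence_coeffs a k * f (n - k))"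
    using rec[of n] less.prems by (simp add: sum.last_plus)
  also have "(\<Sum>k=1..<n. recurrence_coeffs a k * f (n - k)) = (\<Sum>k=1..<n. recurrence_coeffs a k * a (n - k))"
    using less.IH by (intro sum.cong) auto
  finally show ?case
    using f0 recurrence_coeffs.simps[of a n] by simp
qed

theorem theorem2:
  fixes a :: "nat \<Rightarrow> int"
  shows "\<exists>R :: nat rod set. rod_set R \<and> (\<forall>n\<ge>1. F n R = a n)"
proof (intro exI conjI allI impI)
  let ?R = "rods_with_net_count (recurrence_coeffs a)"
  show R: "rod_set ?R" by (rule rod_set_rods_with_net_count)
  have "F n ?R = (\<Sum>k=1..n. recurrence_coeffs a k * F (n - k) ?R)" if "n > 0" for n
    unfolding F_recurrence[OF R that] by (simp add: net_rods_rods_with_net_count)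
  then show "F n ?R = a n" if "n \<ge> 1" for n
    using recurrence_coeffs_solution[where f = "\<lambda>n. F n ?R", OF F_0[OF R]] that by blast
qed

end
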